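(* Let $\Theta=\{1,2\}$ and let $P_1,\dots,P_m$ be experiments ($P_i:\Theta\to\Delta(Y_i)$, $Y_i$ finite) such that $w(P_1)>\max\{w(P_i):i\ne1\}$. Then for every decision problem $(A,u)$ there exists $t^*$ such that for all integers $t\ge t^*$, $$V(P_1^t,\dots,P_m^t;(A,u))=V(P_1^t;(A,u)).$$
   Context: A decision problem is a pair $(A,u)$ with $A$ a finite nonempty action set and $u:\Theta\times A\to\mathbb{R}$; for $\alpha\in\Delta(A)$ write $u(\theta,\alpha)=\sum_a\alpha(a)u(\theta,a)$. An experiment is a map $P:\Theta\to\Delta(Y)$ with $Y$ a finite signal set. Given experiments $Q_j:\Theta\to\Delta(Z_j)$, $j=1,\dots,m$, let $\mathbf Z=Z_1\times\cdots\times Z_m$ and let $\mathcal P(Q_1,\dots,Q_m)$ be the set of experiments $Q:\Theta\to\Delta(\mathbf Z)$ whose $j$-th marginal is $Q_j(\cdot|\theta)$ for every $\theta$ and $j$. Define $V(Q_1,\dots,Q_m;(A,u))=\max_{\sigma:\mathbf Z\to\Delta(A)}\min_{Q\in\mathcal P(Q_1,\dots,Q_m)}\sum_{\theta}\sum_{\mathbf z}Q(\mathbf z|\theta)u(\theta,\sigma(\mathbf z))$; for a single experiment, $V(Q;(A,u))=\max_{\sigma:Z\to\Delta(A)}\sum_\theta\sum_z Q(z|\theta)u(\theta,\sigma(z))$. For an experiment $P:\Theta\to\Delta(Y)$ and integer $t\ge1$, $P^t:\Theta\to\Delta(Y^t)$ is the experiment of $t$ i.i.d. draws: $P^t(y_1,\dots,y_t|\theta)=\prod_{\tau=1}^tP(y_\tau|\theta)$.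 For an experiment $P$ with $\Theta=\{1,2\}$, $w(P)$ denotes the Chernoff distance between $P(\cdot|1)$ and $P(\cdot|2)$: $w(P)=-\min_{s\in[0,1]}\log\sum_{y\in Y}P(y|1)^sP(y|2)^{1-s}$, equivalently $w(P)=\min_{\nu\in\Delta(Y)}\max_{\theta\in\Theta}KL(\nu,P(\cdot|\theta))$ where $KL(\nu,\nu')=\sum_y\nu(y)\log\frac{\nu(y)}{\nu'(y)}$. *)

theory Defs
  imports "HOL-Analysis.Analysis" "HOL-Library.Extended_Real"
begin

text \<open>States: Theta = {1,2}. An experiment on a finite signal set Y is
  a function P :: nat \<Rightarrow> 'y \<Rightarrow> real, P theta y = P(y|theta).\<close>

definition Theta :: "nat set" where "Theta = {1, 2}"

definition is_dist :: "'x set \<Rightarrow> ('x \<Rightarrow> real) \<Rightarrow> bool" where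
  "is_dist S p \<longleftrightarrow> (\<forall>x\<in>S. 0 \<le> p x) \<and> sum p S = 1"

definition is_experiment :: "nat set \<Rightarrow> 'y set \<Rightarrow> (nat \<Rightarrow> 'y \<Rightarrow> real) \<Rightarrow> bool" where
  "is_experiment Th Y P \<longleftrightarrow> finite Y \<and> (\<forall>\<theta>\<in>Th. is_dist Y (P \<theta>))"

text \<open>t i.i.d. draws: signals are functions on {..<t} with values in Y.\<close>
definition power_carrier :: "nat \<Rightarrow> 'y set \<Rightarrow> (nat \<Rightarrow> 'y) set" where
  "power_carrier t Y = PiE {..<t} (\<lambda>_. Y)"

definition power_exp :: "(nat \<Rightarrow> 'y \<Rightarrow> real) \<Rightarrow> nat \<Rightarrow> nat \<Rightarrow> (nat \<Rightarrow> 'y) \<Rightarrow> real" where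
  "power_exp P t \<theta> ys = (\<Prod>\<tau><t. P \<theta> (ys \<tau>))"

definition strategies :: "'z set \<Rightarrow> 'a set \<Rightarrow> ('z \<Rightarrow> 'a \<Rightarrow> real) set" where
  "strategies Z A = {\<sigma>. \<forall>z\<in>Z. is_dist A (\<sigma> z)}"

definition payoff :: "nat set \<Rightarrow> 'z set \<Rightarrow> (nat \<Rightarrow> 'z \<Rightarrow> real) \<Rightarrow> 'a set
    \<Rightarrow> (nat \<Rightarrow> 'a \<Rightarrow> real) \<Rightarrow> ('z \<Rightarrow> 'a \<Rightarrow> real) \<Rightarrow> real" where
  "payoff Th Z Q A u \<sigma> = (\<Sum>\<theta>\<in>Th. \<Sum>z\<in>Z. Q \<theta> z * (\<Sum>a\<in>A. \<sigma> z a * u \<theta> a))"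

definition couplings :: "nat set \<Rightarrow> nat set \<Rightarrow> (nat \<Rightarrow> 'z set) \<Rightarrow> (nat \<Rightarrow> nat \<Rightarrow> 'z \<Rightarrow> real)
    \<Rightarrow> (nat \<Rightarrow> (nat \<Rightarrow> 'z) \<Rightarrow> real) set" where
  "couplings Th I Z Q = {R. (\<forall>\<theta>\<in>Th. is_dist (PiE I Z) (R \<theta>)) \<and>
      (\<forall>\<theta>\<in>Th. \<forall>j\<in>I. \<forall>zj\<in>Z j. (\<Sum>z\<in>{z\<in>PiE I Z. z j = zj}. R \<theta> z) = Q j \<theta> zj)}"

definition V_multi :: "nat set \<Rightarrow> nat set \<Rightarrow> (nat \<Rightarrow> 'z set) \<Rightarrow> (nat \<Rightarrow> nat \<Rightarrow> 'z \<Rightarrow> real)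
    \<Rightarrow> 'a set \<Rightarrow> (nat \<Rightarrow> 'a \<Rightarrow> real) \<Rightarrow> real" where
  "V_multi Th I Z Q A u =
     (SUP \<sigma>\<in>strategies (PiE I Z) A. INF R\<in>couplings Th I Z Q. payoff Th (PiE I Z) R A u \<sigma>)"

definition V_single :: "nat set \<Rightarrow> 'z set \<Rightarrow> (nat \<Rightarrow> 'z \<Rightarrow> real)
    \<Rightarrow> 'a set \<Rightarrow> (nat \<Rightarrow> 'a \<Rightarrow> real) \<Rightarrow> real" where
  "V_single Th Z Q A u = (SUP \<sigma>\<in>strategies Z A. payoff Th Z Q A u \<sigma>)"

text \<open>x^s with the convention x^0 = 1 (also for x = 0).\<close>
definition pw :: "real \<Rightarrow> real \<Rightarrow> real" where
  "pw x s = (if s = 0 then 1 else x powr s)"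

definition chernoff_coeff :: "'y set \<Rightarrow> (nat \<Rightarrow> 'y \<Rightarrow> real) \<Rightarrow> real" where
  "chernoff_coeff Y P = (INF s\<in>{0..1}. \<Sum>y\<in>Y. pw (P 1 y) s * pw (P 2 y) (1 - s))"

definition chernoff :: "'y set \<Rightarrow> (nat \<Rightarrow> 'y \<Rightarrow> real) \<Rightarrow> ereal" where
  "chernoff Y P = (if chernoff_coeff Y P = 0 then \<infinity> else ereal (- ln (chernoff_coeff Y P)))"

end

theory Submission
  imports Defs
begin

(* Write overlap Z Q for sum_z min (Q(z|1), Q(z|2)).

   Decision side: choose actions a_1, a_2 and ratios r_1, r_2 >= 1 such that a_theta is a best
   reply whenever the weight of state theta is at least r_theta times that of the other state.
   Split the first experiment into a balanced part, with likelihood ratio in [1/r_2, r_1] and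
   total mass at most K = r_1 + r_2 times its overlap, and two excess parts charging one state
   each.  If every other experiment has overlap at least K times that of the first, it is a
   mixture of a state-independent distribution, with the weight of the balanced part, and a
   remainder; this lets us couple all experiments so that, given which part the first signal
   came from, the other signals carry no information about the state.  Under this coupling a
   best reply to the first signal stays a best reply to all signals, so the maxmin value equals
   the value of the first experiment.

   Asymptotic side (Chernoff): the overlap of t i.i.d. draws is at most c(s)^t for every s,
   c(s) = sum_y P(y|1)^s P(y|2)^(1-s), and at least b^t eventually for every b < min_s c(s), by
   exponential tilting at the minimiser of c.  Hence w(P_1) > w(P_i) makes the overlap of P_i^t
   eventually exceed K times that of P_1^t. *)

section \<open>Exponential tilting\<close>

lemma sum_PiE_lessThan_prod:
  fixes h :: "'a \<Rightarrow> 'b::comm_semiring_1"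
  assumes "finite S"
  shows "(\<Sum>z\<in>PiE {..<t} (\<lambda>_. S). \<Prod>\<tau><t. h (z \<tau>)) = (\<Sum>y\<in>S. h y) ^ t"
  using prod_sum_PiE[of "{..<t}" "\<lambda>_. S" "\<lambda>_. h"] assms by simp

lemma sum_PiE_prod_fixed_coord:
  fixes h :: "'i \<Rightarrow> 'z \<Rightarrow> real"
  assumes "finite I" "\<And>i. i \<in> I \<Longrightarrow> finite (Z i)" "j \<in> I" "w \<in> Z j"
  shows "(\<Sum>z\<in>{z\<in>PiE I Z. z j = w}. \<Prod>i\<in>I. h i (z i)) = h j w * (\<Prod>i\<in>I - {j}. \<Sum>y\<in>Z i. h i y)"
proof -
  define h' where "h' i y = (if i = j then (if y = w then h i y else 0) else h i y)" for i y
  have "(\<Sum>z\<in>{z\<in>PiE I Z. z j = w}. \<Prod>i\<in>I. h i (z i)) = (\<Sum>z\<in>PiE I Z. \<Prod>i\<in>I. h' i (z i))"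
  proof (rule sum.mono_neutral_cong_left)
    show "finite (PiE I Z)" using assms by (intro finite_PiE) auto
    show "\<forall>z\<in>PiE I Z - {z\<in>PiE I Z. z j = w}. (\<Prod>i\<in>I. h' i (z i)) = 0"
      using assms by (auto simp: h'_def intro!: prod_zero bexI[of _ j])
    show "\<And>z. z \<in> {z\<in>PiE I Z. z j = w} \<Longrightarrow> (\<Prod>i\<in>I. h i (z i)) = (\<Prod>i\<in>I. h' i (z i))"
      by (auto simp: h'_def intro!: prod.cong)
  qed auto
  also have "\<dots> = (\<Prod>i\<in>I. \<Sum>y\<in>Z i. h' i y)"
    using prod_sum_PiE[of I Z h'] assms by simp
  also have "\<dots> = (\<Sum>y\<in>Z j. h' j y) * (\<Prod>i\<in>I - {j}. \<Sum>y\<in>Z i. h' i y)"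
    using assms by (intro prod.remove)
  also have "(\<Prod>i\<in>I - {j}. \<Sum>y\<in>Z i. h' i y) = (\<Prod>i\<in>I - {j}. \<Sum>y\<in>Z i. h i y)"
    unfolding h'_def by (intro prod.cong) auto
  also have "(\<Sum>y\<in>Z j. h' j y) = h j w"
    using assms by (simp add: h'_def)
  finally show ?thesis .
qed

lemma chernoff_tail_bound:
  fixes w h :: "'x \<Rightarrow> real"
  assumes "finite S" "\<And>z. z \<in> S \<Longrightarrow> 0 \<le> w z" "0 \<le> l"
  shows "(\<Sum>z\<in>{z\<in>S. E < h z}. w z) \<le> exp (- (l * E)) * (\<Sum>z\<in>S. w z * exp (l * h z))"
proof -
  have "(\<Sum>z\<in>{z\<in>S. E < h z}. w z) \<le> (\<Sum>z\<in>{z\<in>S. E < h z}. w z * exp (l * (h z - E)))"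
  proof (intro sum_mono)
    fix z assume "z \<in> {z\<in>S. E < h z}"
    hence "1 \<le> exp (l * (h z - E))" and "0 \<le> w z" using assms by auto
    thus "w z \<le> w z * exp (l * (h z - E))" by (metis mult_left_mono mult.right_neutral)
  qed
  also have "\<dots> \<le> (\<Sum>z\<in>S. w z * exp (l * (h z - E)))"
    using assms by (intro sum_mono2) auto
  also have "\<dots> = exp (- (l * E)) * (\<Sum>z\<in>S. w z * exp (l * h z))"
    by (simp add: sum_distrib_left right_diff_distrib exp_diff exp_minus field_simps)
  finally show ?thesis .
qed

lemma exp_tilt_le_min:
  fixes a b s E :: real
  assumes "0 \<le> s" "s \<le> 1" "0 \<le> E"
    and "s < 1 \<Longrightarrow> - E \<le> a - b" "0 < s \<Longrightarrow> a - b \<le> E"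
  shows "exp (- E) * exp (s * a + (1 - s) * b) \<le> min (exp a) (exp b)"
proof -
  have "s * a + (1 - s) * b - E \<le> a"
  proof (cases "s < 1")
    case True
    have "(1 - s) * (- E) \<le> (1 - s) * (a - b)" using assms True by (intro mult_left_mono) auto
    moreover have "(1 - s) * E \<le> E" using assms by (simp add: mult_left_le_one_le)
    ultimately show ?thesis by (simp add: algebra_simps)
  qed (use assms in auto)
  moreover have "s * a + (1 - s) * b - E \<le> b"
  proof (cases "0 < s")
    case True
    have "s * (a - b) \<le> s * E" using assms True by (intro mult_left_mono) auto
    moreover have "s * E \<le> E" using assms by (simp add: mult_left_le_one_le)
    ultimately show ?thesis by (simp add: algebra_simps)
  qed (use assms in auto)
  ultimately show ?thesis by (simp add: exp_add[symmetric])
qed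

(* Where LA - LB lies in [-E, E] (only the relevant side is needed at s = 0 or s = 1) the tilted
   weight is at most exp E * min (exp LA) (exp LB); the tails are bounded by chernoff_tail_bound. *)
lemma tilted_overlap_lower_bound:
  fixes LA LB :: "'x \<Rightarrow> real" and S :: "'x set"
  defines "W \<equiv> \<lambda>s. \<Sum>z\<in>S. exp (s * LA z + (1 - s) * LB z)"
  assumes S: "finite S" and s: "0 \<le> s" "s \<le> 1" and E: "0 \<le> E" and l: "0 \<le> l1" "0 \<le> l2"
  shows "exp (- E) * (W s - (if s < 1 then exp (- (l1 * E)) * W (s - l1) else 0)
                          - (if 0 < s then exp (- (l2 * E)) * W (s + l2) else 0))
         \<le> (\<Sum>z\<in>S. min (exp (LA z)) (exp (LB z)))"
proof -
  define w where "w z = exp (s * LA z + (1 - s) * LB z)" for z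
  define Lo where "Lo = (if s < 1 then {z\<in>S. E < LB z - LA z} else {})"
  define Up where "Up = (if 0 < s then {z\<in>S. E < LA z - LB z} else {})"
  have w_nonneg: "0 \<le> w z" for z by (simp add: w_def)
  have Lo_le: "sum w Lo \<le> (if s < 1 then exp (- (l1 * E)) * W (s - l1) else 0)"
  proof -
    have "w z * exp (l1 * (LB z - LA z)) = exp ((s - l1) * LA z + (1 - (s - l1)) * LB z)" for z
      by (simp add: w_def exp_add[symmetric] algebra_simps)
    thus ?thesis
      using chernoff_tail_bound[OF S, of w l1 E "\<lambda>z. LB z - LA z"] S w_nonneg l
      by (simp add: Lo_def W_def)
  qed
  have Up_le: "sum w Up \<le> (if 0 < s then exp (- (l2 * E)) * W (s + l2) else 0)"
  proof -
    have "w z * exp (l2 * (LA z - LB z)) = exp ((s + l2) * LA z + (1 - (s + l2)) * LB z)" for z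
      by (simp add: w_def exp_add[symmetric] algebra_simps)
    thus ?thesis
      using chernoff_tail_bound[OF S, of w l2 E "\<lambda>z. LA z - LB z"] S w_nonneg l
      by (simp add: Up_def W_def)
  qed
  have sub: "Lo \<subseteq> S" "Up \<subseteq> S" by (auto simp: Lo_def Up_def)
  have "W s = sum w (S - (Lo \<union> Up)) + sum w (Lo \<union> Up)"
    unfolding W_def w_def using S sub by (subst sum.subset_diff[of "Lo \<union> Up"]) auto
  also have "sum w (Lo \<union> Up) \<le> sum w Lo + sum w Up"
    using S sub w_nonneg by (simp add: sum_Un finite_subset sum_nonneg)
  finally have "W s - (if s < 1 then exp (- (l1 * E)) * W (s - l1) else 0)
      - (if 0 < s then exp (- (l2 * E)) * W (s + l2) else 0) \<le> sum w (S - (Lo \<union> Up))"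
    using Lo_le Up_le by linarith
  hence "exp (- E) * (W s - (if s < 1 then exp (- (l1 * E)) * W (s - l1) else 0)
      - (if 0 < s then exp (- (l2 * E)) * W (s + l2) else 0)) \<le> (\<Sum>z\<in>S - (Lo \<union> Up). exp (- E) * w z)"
    unfolding sum_distrib_left[symmetric] by (rule mult_left_mono) auto
  also have "\<dots> \<le> (\<Sum>z\<in>S - (Lo \<union> Up). min (exp (LA z)) (exp (LB z)))"
    unfolding w_def using s E
    by (intro sum_mono exp_tilt_le_min) (auto simp: Lo_def Up_def split: if_splits)
  also have "\<dots> \<le> (\<Sum>z\<in>S. min (exp (LA z)) (exp (LB z)))"
    using S by (intro sum_mono2) auto
  finally show ?thesis .
qed

lemma minimum_first_order:
  fixes f :: "real \<Rightarrow> real"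
  assumes "(f has_real_derivative D) (at x)" "x \<in> {a..b}" "\<And>y. y \<in> {a..b} \<Longrightarrow> f x \<le> f y"
  shows "x < b \<Longrightarrow> 0 \<le> D" and "a < x \<Longrightarrow> D \<le> 0"
proof -
  show "0 \<le> D" if "x < b"
  proof (rule ccontr)
    assume "\<not> 0 \<le> D"
    then obtain d where "d > 0" and dec: "\<And>h. 0 < h \<Longrightarrow> h < d \<Longrightarrow> f (x + h) < f x"
      using DERIV_neg_dec_right[OF assms(1)] by force
    define h where "h = min (d/2) (b - x)"
    have "0 < h" "h < d" "x + h \<in> {a..b}" using \<open>d > 0\<close> assms(2) that by (auto simp: h_def)
    thus False using dec assms(3) by fastforce
  qed
  show "D \<le> 0" if "a < x"
  proof (rule ccontr)
    assume "\<not> D \<le> 0"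
    then obtain d where "d > 0" and inc: "\<And>h. 0 < h \<Longrightarrow> h < d \<Longrightarrow> f (x - h) < f x"
      using DERIV_pos_inc_left[OF assms(1)] by force
    define h where "h = min (d/2) (x - a)"
    have "0 < h" "h < d" "x - h \<in> {a..b}" using \<open>d > 0\<close> assms(2) that by (auto simp: h_def)
    thus False using inc assms(3) by fastforce
  qed
qed

lemma exists_tilt_decrease:
  fixes g :: "real \<Rightarrow> real"
  assumes g: "(g has_real_derivative D) (at s)" and "0 < \<epsilon>" "0 < g s" "d * D \<le> 0"
  shows "\<exists>l>0. exp (- (l * \<epsilon>)) * g (s + d * l) < g s"
proof -
  have "((\<lambda>l. g (s + d * l)) has_real_derivative D * d) (at 0)"
    by (rule DERIV_chain2[of g]) (use g in \<open>auto intro!: derivative_eq_intros\<close>)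
  hence "((\<lambda>l. exp (- (l * \<epsilon>)) * g (s + d * l)) has_real_derivative D * d - \<epsilon> * g s) (at 0)"
    by (auto intro!: derivative_eq_intros)
  moreover have "D * d - \<epsilon> * g s < 0"
    using mult_pos_pos[OF assms(2,3)] assms(4) by (simp add: mult.commute[of D])
  ultimately obtain \<delta> where "\<delta> > 0" and dec: "\<forall>h>0. h < \<delta> \<longrightarrow> exp (- (h * \<epsilon>)) * g (s + d * h) < g s"
    by (auto dest: DERIV_neg_dec_right)
  thus ?thesis using dec[rule_format, of "\<delta> / 2"] by (intro exI[of _ "\<delta> / 2"]) auto
qed

lemma eventually_power_le_tail:
  fixes b c q1 q2 :: real
  assumes "0 \<le> b" "b < c" "0 \<le> q1" "q1 < 1" "0 \<le> q2" "q2 < 1"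
  shows "eventually (\<lambda>t. b ^ t \<le> c ^ t * (1 - q1 ^ t - q2 ^ t)) sequentially"
proof -
  have "eventually (\<lambda>t. q1 ^ t < 1/4) sequentially" "eventually (\<lambda>t. q2 ^ t < 1/4) sequentially"
    "eventually (\<lambda>t. (b / c) ^ t < 1/2) sequentially"
    by (rule order_tendstoD(2)[OF LIMSEQ_realpow_zero]; use assms in simp)+
  thus ?thesis
  proof eventually_elim
    case (elim t)
    have "0 < c ^ t" using assms by simp
    have "b ^ t = c ^ t * (b / c) ^ t" using assms by (simp add: power_divide)
    also have "\<dots> \<le> c ^ t * (1 - q1 ^ t - q2 ^ t)"
      using elim \<open>0 < c ^ t\<close> by (intro mult_left_mono) auto
    finally show ?case .
  qed
qed

section \<open>Overlap of repeated experiments\<close>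

definition overlap :: "'z set \<Rightarrow> (nat \<Rightarrow> 'z \<Rightarrow> real) \<Rightarrow> real" where
  "overlap Z Q = (\<Sum>z\<in>Z. min (Q 1 z) (Q 2 z))"

definition chernoff_sum :: "'y set \<Rightarrow> (nat \<Rightarrow> 'y \<Rightarrow> real) \<Rightarrow> real \<Rightarrow> real" where
  "chernoff_sum Y P s = (\<Sum>y\<in>Y. pw (P 1 y) s * pw (P 2 y) (1 - s))"

definition common_support :: "'y set \<Rightarrow> (nat \<Rightarrow> 'y \<Rightarrow> real) \<Rightarrow> 'y set" where
  "common_support Y P = {y\<in>Y. 0 < P 1 y \<and> 0 < P 2 y}"

definition tilted_sum :: "'y set \<Rightarrow> (nat \<Rightarrow> 'y \<Rightarrow> real) \<Rightarrow> real \<Rightarrow> real" where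
  "tilted_sum Y P s = (\<Sum>y\<in>common_support Y P. exp (s * ln (P 1 y) + (1 - s) * ln (P 2 y)))"

lemma is_experiment_ThetaD:
  assumes "is_experiment Theta Y P"
  shows "finite Y" "\<And>y. y \<in> Y \<Longrightarrow> 0 \<le> P 1 y" "\<And>y. y \<in> Y \<Longrightarrow> 0 \<le> P 2 y"
    "sum (P 1) Y = 1" "sum (P 2) Y = 1"
  using assms by (auto simp: is_experiment_def is_dist_def Theta_def)

lemma is_experiment_power:
  assumes "is_experiment Th Y P"
  shows "is_experiment Th (power_carrier t Y) (power_exp P t)"
  using assms sum_PiE_lessThan_prod[of Y "P _" t]
  by (auto simp: is_experiment_def is_dist_def power_carrier_def power_exp_def PiE_iff
           intro!: finite_PiE prod_nonneg)

lemma overlap_nonneg: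
  assumes "is_experiment Theta Z Q"
  shows "0 \<le> overlap Z Q"
  using is_experiment_ThetaD[OF assms] by (auto simp: overlap_def intro!: sum_nonneg)

lemma pw_prod:
  assumes "\<And>x. x \<in> I \<Longrightarrow> 0 \<le> f x"
  shows "pw (\<Prod>x\<in>I. f x) s = (\<Prod>x\<in>I. pw (f x) s)"
  using assms by (simp add: pw_def prod_powr_distrib)

lemma min_le_pw:
  fixes a b s :: real
  assumes "0 \<le> a" "0 \<le> b" "0 \<le> s" "s \<le> 1"
  shows "min a b \<le> pw a s * pw b (1 - s)"
proof (cases "s = 0 \<or> s = 1 \<or> a = 0 \<or> b = 0")
  case True
  thus ?thesis using assms by (auto simp: pw_def)
next
  case False
  hence "0 < a" "0 < b" "0 < s" "s < 1" using assms by auto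
  have "min a b = min a b powr s * min a b powr (1 - s)"
    using \<open>0 < a\<close> \<open>0 < b\<close> by (simp add: powr_add[symmetric])
  also have "\<dots> \<le> a powr s * b powr (1 - s)"
    using \<open>0 < a\<close> \<open>0 < b\<close> assms by (intro mult_mono powr_mono2) auto
  finally show ?thesis using False by (simp add: pw_def)
qed

lemma chernoff_sum_nonneg:
  assumes "is_experiment Theta Y P"
  shows "0 \<le> chernoff_sum Y P s"
  using is_experiment_ThetaD[OF assms]
  by (auto simp: chernoff_sum_def pw_def intro!: sum_nonneg mult_nonneg_nonneg)

lemma chernoff_coeff_eq: "chernoff_coeff Y P = (INF s\<in>{0..1}. chernoff_sum Y P s)"
  by (simp add: chernoff_coeff_def chernoff_sum_def)

lemma chernoff_coeff_le:
  assumes "is_experiment Theta Y P" "s \<in> {0..1}"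
  shows "chernoff_coeff Y P \<le> chernoff_sum Y P s"
  unfolding chernoff_coeff_eq using assms chernoff_sum_nonneg[OF assms(1)]
  by (intro cINF_lower) (auto intro!: bdd_belowI[where m=0])

lemma chernoff_coeff_nonneg:
  assumes "is_experiment Theta Y P"
  shows "0 \<le> chernoff_coeff Y P"
  unfolding chernoff_coeff_eq using chernoff_sum_nonneg[OF assms] by (intro cINF_greatest) auto

lemma chernoff_coeff_less_iff:
  assumes "is_experiment Theta Y P"
  shows "chernoff_coeff Y P < c \<longleftrightarrow> (\<exists>s\<in>{0..1}. chernoff_sum Y P s < c)"
  unfolding chernoff_coeff_eq using chernoff_sum_nonneg[OF assms]
  by (intro cINF_less_iff) (auto intro!: bdd_belowI[where m=0])

lemma overlap_power_le:
  assumes "is_experiment Theta Y P" "s \<in> {0..1}"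
  shows "overlap (power_carrier t Y) (power_exp P t) \<le> chernoff_sum Y P s ^ t"
proof -
  note P = is_experiment_ThetaD[OF assms(1)]
  have "overlap (power_carrier t Y) (power_exp P t)
      \<le> (\<Sum>z\<in>power_carrier t Y. \<Prod>\<tau><t. pw (P 1 (z \<tau>)) s * pw (P 2 (z \<tau>)) (1 - s))"
    unfolding overlap_def
  proof (intro sum_mono)
    fix z assume "z \<in> power_carrier t Y"
    hence nonneg: "\<And>\<tau>. \<tau> < t \<Longrightarrow> 0 \<le> P 1 (z \<tau>) \<and> 0 \<le> P 2 (z \<tau>)"
      using P by (auto simp: power_carrier_def PiE_iff)
    have "min (power_exp P t 1 z) (power_exp P t 2 z)
        \<le> pw (power_exp P t 1 z) s * pw (power_exp P t 2 z) (1 - s)"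
      using assms(2) nonneg unfolding power_exp_def by (intro min_le_pw prod_nonneg) auto
    also have "\<dots> = (\<Prod>\<tau><t. pw (P 1 (z \<tau>)) s) * (\<Prod>\<tau><t. pw (P 2 (z \<tau>)) (1 - s))"
      unfolding power_exp_def using nonneg by (subst (1 2) pw_prod) auto
    also have "\<dots> = (\<Prod>\<tau><t. pw (P 1 (z \<tau>)) s * pw (P 2 (z \<tau>)) (1 - s))"
      by (simp add: prod.distrib)
    finally show "min (power_exp P t 1 z) (power_exp P t 2 z) \<le> \<dots>" .
  qed
  also have "\<dots> = chernoff_sum Y P s ^ t"
    unfolding power_carrier_def chernoff_sum_def by (rule sum_PiE_lessThan_prod[OF P(1)])
  finally show ?thesis .
qed

lemma tilted_sum_has_derivative:
  "(tilted_sum Y P has_real_derivative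
     (\<Sum>y\<in>common_support Y P. exp (s * ln (P 1 y) + (1 - s) * ln (P 2 y)) * (ln (P 1 y) - ln (P 2 y))))
   (at s)"
  unfolding tilted_sum_def[abs_def]
  by (rule DERIV_sum) (auto intro!: derivative_eq_intros simp: algebra_simps)

lemma chernoff_sum_eq_tilted_sum:
  assumes "is_experiment Theta Y P" "0 < s" "s < 1"
  shows "chernoff_sum Y P s = tilted_sum Y P s"
  unfolding chernoff_sum_def tilted_sum_def
proof (rule sum.mono_neutral_cong_right)
  note P = is_experiment_ThetaD[OF assms(1)]
  show "finite Y" by (rule P(1))
  show "\<forall>y\<in>Y - common_support Y P. pw (P 1 y) s * pw (P 2 y) (1 - s) = 0"
    using P(2,3) assms by (force simp: common_support_def pw_def)
  show "pw (P 1 y) s * pw (P 2 y) (1 - s) = exp (s * ln (P 1 y) + (1 - s) * ln (P 2 y))"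
    if "y \<in> common_support Y P" for y
    using that assms by (simp add: common_support_def pw_def powr_def exp_add mult.commute)
qed (auto simp: common_support_def)

lemma overlap_power_ge_tilted:
  assumes P: "is_experiment Theta Y P" and s: "s \<in> {0..1}" and "0 \<le> \<epsilon>" "0 \<le> l1" "0 \<le> l2"
  defines "g \<equiv> tilted_sum Y P"
  shows "exp (- (\<epsilon> * t)) * (g s ^ t - (if s < 1 then (exp (- (l1 * \<epsilon>)) * g (s - l1)) ^ t else 0)
           - (if 0 < s then (exp (- (l2 * \<epsilon>)) * g (s + l2)) ^ t else 0))
         \<le> overlap (power_carrier t Y) (power_exp P t)"
proof -
  note Pd = is_experiment_ThetaD[OF P]
  define S where "S = PiE {..<t} (\<lambda>_. common_support Y P)"
  define LA where "LA z = (\<Sum>\<tau><t. ln (P 1 (z \<tau>)))" for z :: "nat \<Rightarrow> 'a"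
  define LB where "LB z = (\<Sum>\<tau><t. ln (P 2 (z \<tau>)))" for z :: "nat \<Rightarrow> 'a"
  have fin: "finite (common_support Y P)" using Pd(1) by (simp add: common_support_def)
  hence finS: "finite S" by (simp add: S_def finite_PiE)
  have S_sub: "S \<subseteq> power_carrier t Y"
    unfolding S_def power_carrier_def by (intro PiE_mono) (auto simp: common_support_def)
  have W: "(\<Sum>z\<in>S. exp (r * LA z + (1 - r) * LB z)) = g r ^ t" for r
  proof -
    have "exp (r * LA z + (1 - r) * LB z) = (\<Prod>\<tau><t. exp (r * ln (P 1 (z \<tau>)) + (1 - r) * ln (P 2 (z \<tau>))))" for z
      by (simp add: LA_def LB_def sum_distrib_left sum.distrib[symmetric] exp_sum)
    thus ?thesis
      unfolding g_def tilted_sum_def S_def using sum_PiE_lessThan_prod[OF fin] by simp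
  qed
  have E: "exp (- (l * (\<epsilon> * t))) * g r ^ t = (exp (- (l * \<epsilon>)) * g r) ^ t" for l r
    by (simp add: power_mult_distrib exp_of_nat_mult[symmetric] mult.commute mult.left_commute)
  have "exp (- (\<epsilon> * t)) * (g s ^ t - (if s < 1 then (exp (- (l1 * \<epsilon>)) * g (s - l1)) ^ t else 0)
           - (if 0 < s then (exp (- (l2 * \<epsilon>)) * g (s + l2)) ^ t else 0))
      \<le> (\<Sum>z\<in>S. min (exp (LA z)) (exp (LB z)))"
    using tilted_overlap_lower_bound[OF finS, of s "\<epsilon> * t" l1 l2 LA LB] s assms(3-5)
    unfolding W E by simp
  also have "\<dots> = (\<Sum>z\<in>S. min (power_exp P t 1 z) (power_exp P t 2 z))"
    by (intro sum.cong refl)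
      (auto simp: S_def LA_def LB_def power_exp_def exp_sum common_support_def PiE_iff)
  also have "\<dots> \<le> overlap (power_carrier t Y) (power_exp P t)"
    unfolding overlap_def using S_sub is_experiment_power[OF P, of t]
    by (intro sum_mono2) (auto simp: is_experiment_def is_dist_def Theta_def power_carrier_def intro!: finite_PiE Pd(1))
  finally show ?thesis .
qed

lemma tilted_sum_minimum:
  assumes P: "is_experiment Theta Y P"
  obtains s0 D where "s0 \<in> {0..1}" "chernoff_coeff Y P \<le> tilted_sum Y P s0"
    "(tilted_sum Y P has_real_derivative D) (at s0)" "s0 < 1 \<Longrightarrow> 0 \<le> D" "0 < s0 \<Longrightarrow> D \<le> 0"
proof -
  define g where "g = tilted_sum Y P"
  obtain D where D: "\<And>s. (g has_real_derivative D s) (at s)"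
    using tilted_sum_has_derivative[of Y P] unfolding g_def[symmetric] by (rule that)
  have cont: "continuous_on {0..1} g"
    using D by (intro continuous_at_imp_continuous_on ballI DERIV_isCont) blast
  have coeff_le: "chernoff_coeff Y P \<le> g s" if "s \<in> {0..1}" for s
  proof (rule continuous_ge_on_closure[of "{0<..<1}" g s])
    show "continuous_on (closure {0<..<1}) g" "s \<in> closure {0<..<1}"
      using cont that by (auto simp: closure_greaterThanLessThan)
    show "chernoff_coeff Y P \<le> g x" if "x \<in> {0<..<1}" for x
      using that chernoff_coeff_le[OF P, of x] chernoff_sum_eq_tilted_sum[OF P, of x] by (simp add: g_def)
  qed
  obtain s0 where s0: "s0 \<in> {0..1}" "\<And>s. s \<in> {0..1} \<Longrightarrow> g s0 \<le> g s"
    using continuous_attains_inf[OF compact_Icc _ cont] by auto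
  show ?thesis
  proof (rule that[of s0 "D s0"])
    show "s0 \<in> {0..1}" by (fact s0(1))
    show "chernoff_coeff Y P \<le> tilted_sum Y P s0" using coeff_le[OF s0(1)] by (simp add: g_def)
    show "(tilted_sum Y P has_real_derivative D s0) (at s0)" using D by (simp add: g_def)
    show "s0 < 1 \<Longrightarrow> 0 \<le> D s0" "0 < s0 \<Longrightarrow> D s0 \<le> 0" using minimum_first_order[OF D s0] by auto
  qed
qed

lemma overlap_power_eventually_ge:
  assumes P: "is_experiment Theta Y P" and b: "0 \<le> b" "b < chernoff_coeff Y P"
  shows "eventually (\<lambda>t. b ^ t \<le> overlap (power_carrier t Y) (power_exp P t)) sequentially"
proof -
  define g where "g = tilted_sum Y P"
  obtain s0 D where s0: "s0 \<in> {0..1}" "chernoff_coeff Y P \<le> g s0"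
    and D: "(g has_real_derivative D) (at s0)" "s0 < 1 \<Longrightarrow> 0 \<le> D" "0 < s0 \<Longrightarrow> D \<le> 0"
    using tilted_sum_minimum[OF P] unfolding g_def by blast
  hence "b < g s0" using b by linarith
  define c where "c = (g s0 + b) / 2"
  have c: "b < c" "c < g s0" "0 < c" using \<open>b < g s0\<close> b by (auto simp: c_def)
  define \<epsilon> where "\<epsilon> = ln (g s0 / c)"
  have \<epsilon>: "0 < \<epsilon>" "exp (- \<epsilon>) * g s0 = c" using c by (auto simp: \<epsilon>_def exp_minus)
  obtain l1 where l1: "0 < l1" "s0 < 1 \<Longrightarrow> exp (- (l1 * \<epsilon>)) * g (s0 - l1) < g s0"
  proof (cases "s0 < 1")
    case True
    thus ?thesis
      using that exists_tilt_decrease[OF D(1) \<epsilon>(1), of "-1"] c D(2) by auto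
  qed (use that[of 1] in auto)
  obtain l2 where l2: "0 < l2" "0 < s0 \<Longrightarrow> exp (- (l2 * \<epsilon>)) * g (s0 + l2) < g s0"
  proof (cases "0 < s0")
    case True
    thus ?thesis
      using that exists_tilt_decrease[OF D(1) \<epsilon>(1), of 1] c D(3) by auto
  qed (use that[of 1] in auto)
  define k1 where "k1 = (if s0 < 1 then exp (- (l1 * \<epsilon>)) * g (s0 - l1) else 0)"
  define k2 where "k2 = (if 0 < s0 then exp (- (l2 * \<epsilon>)) * g (s0 + l2) else 0)"
  have g_nonneg: "0 \<le> g s" for s by (simp add: g_def tilted_sum_def sum_nonneg)
  have k: "0 \<le> k1" "k1 < g s0" "0 \<le> k2" "k2 < g s0"
    using l1 l2 c g_nonneg by (auto simp: k1_def k2_def)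
  have "eventually (\<lambda>t. b ^ t \<le> c ^ t * (1 - (k1 / g s0) ^ t - (k2 / g s0) ^ t)) sequentially"
    using b c k by (intro eventually_power_le_tail) auto
  thus ?thesis
  proof eventually_elim
    case (elim t)
    have "c ^ t * (1 - (k1 / g s0) ^ t - (k2 / g s0) ^ t) = exp (- (\<epsilon> * t)) * (g s0 ^ t - k1 ^ t - k2 ^ t)"
      using c \<epsilon>(2)[symmetric]
      by (simp add: exp_of_nat_mult[symmetric] power_mult_distrib power_divide field_simps mult.commute)
    also have "\<dots> \<le> exp (- (\<epsilon> * t)) * (g s0 ^ t
        - (if s0 < 1 then (exp (- (l1 * \<epsilon>)) * g (s0 - l1)) ^ t else 0)
        - (if 0 < s0 then (exp (- (l2 * \<epsilon>)) * g (s0 + l2)) ^ t else 0))"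
      using k by (intro mult_left_mono) (auto simp: k1_def k2_def)
    also have "\<dots> \<le> overlap (power_carrier t Y) (power_exp P t)"
      using overlap_power_ge_tilted[OF P s0(1)] \<epsilon>(1) l1(1) l2(1) unfolding g_def by simp
    finally show ?case using elim by linarith
  qed
qed

lemma chernoff_less_imp_coeff_less:
  assumes P: "is_experiment Theta Y P" and P': "is_experiment Theta Y' P'"
    and less: "chernoff Y' P' < chernoff Y P"
  shows "chernoff_coeff Y P < chernoff_coeff Y' P'" and "0 < chernoff_coeff Y' P'"
proof -
  show pos: "0 < chernoff_coeff Y' P'"
    using less chernoff_coeff_nonneg[OF P'] by (cases "chernoff_coeff Y' P' = 0") (auto simp: chernoff_def)
  show "chernoff_coeff Y P < chernoff_coeff Y' P'"
  proof (cases "chernoff_coeff Y P = 0")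
    case False
    hence "ln (chernoff_coeff Y P) < ln (chernoff_coeff Y' P')"
      using less pos by (simp add: chernoff_def)
    thus ?thesis using False chernoff_coeff_nonneg[OF P] pos by simp
  qed (use pos in simp)
qed

lemma overlap_power_dominates:
  assumes P: "is_experiment Theta Y P" and P': "is_experiment Theta Y' P'"
    and less: "chernoff Y' P' < chernoff Y P"
  shows "eventually (\<lambda>t. K * overlap (power_carrier t Y) (power_exp P t)
                           \<le> overlap (power_carrier t Y') (power_exp P' t)
                         \<and> 0 < overlap (power_carrier t Y') (power_exp P' t)) sequentially"
proof -
  define r where "r = chernoff_coeff Y P"
  define r' where "r' = chernoff_coeff Y' P'"
  have r: "0 \<le> r" "r < r'" using chernoff_coeff_nonneg[OF P] chernoff_less_imp_coeff_less[OF assms]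
    by (auto simp: r_def r'_def)
  define b where "b = (2 * r + r') / 3"
  define b' where "b' = (r + 2 * r') / 3"
  have b: "r < b" "0 < b" "b < b'" "b' < r'" using r by (auto simp: b_def b'_def)
  obtain s where s: "s \<in> {0..1}" "chernoff_sum Y P s < b"
    using chernoff_coeff_less_iff[OF P] b unfolding r_def by blast
  have upper: "overlap (power_carrier t Y) (power_exp P t) \<le> b ^ t" for t
    using overlap_power_le[OF P s(1), of t] chernoff_sum_nonneg[OF P, of s] s(2)
      power_mono[of "chernoff_sum Y P s" b t] by linarith
  have "eventually (\<lambda>t. b' ^ t \<le> overlap (power_carrier t Y') (power_exp P' t)) sequentially"
    using b by (intro overlap_power_eventually_ge[OF P']) (auto simp: r'_def)
  moreover have "eventually (\<lambda>t. \<bar>K\<bar> * (b / b') ^ t < 1) sequentially"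
  proof -
    have "(\<lambda>t. \<bar>K\<bar> * (b / b') ^ t) \<longlonglongrightarrow> \<bar>K\<bar> * 0"
      using b by (intro tendsto_mult tendsto_const LIMSEQ_realpow_zero) auto
    thus ?thesis by (rule order_tendstoD(2)) simp
  qed
  ultimately show ?thesis
  proof eventually_elim
    case (elim t)
    have "K * overlap (power_carrier t Y) (power_exp P t) \<le> \<bar>K\<bar> * overlap (power_carrier t Y) (power_exp P t)"
      using overlap_nonneg[OF is_experiment_power[OF P]] by (intro mult_right_mono) auto
    also have "\<dots> \<le> \<bar>K\<bar> * b ^ t"
      using upper by (intro mult_left_mono) auto
    also have "\<dots> = \<bar>K\<bar> * (b / b') ^ t * b' ^ t"
      using b by (simp add: power_divide)
    also have "\<dots> \<le> b' ^ t"
      using elim b by (intro mult_left_le_one_le) auto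
    finally show ?case using elim b zero_less_power[of b' t] by linarith
  qed
qed

section \<open>Maxmin values and couplings\<close>

definition best_reply :: "nat set \<Rightarrow> 'a set \<Rightarrow> (nat \<Rightarrow> 'a \<Rightarrow> real) \<Rightarrow> (nat \<Rightarrow> real) \<Rightarrow> 'a \<Rightarrow> bool" where
  "best_reply Th A u w a \<longleftrightarrow> a \<in> A \<and> (\<forall>b\<in>A. (\<Sum>\<theta>\<in>Th. w \<theta> * u \<theta> b) \<le> (\<Sum>\<theta>\<in>Th. w \<theta> * u \<theta> a))"

definition pure_strategy :: "('z \<Rightarrow> 'a) \<Rightarrow> 'z \<Rightarrow> 'a \<Rightarrow> real" where
  "pure_strategy act z a = (if a = act z then 1 else 0)"

lemma best_reply_sum:
  assumes "a \<in> A" "\<And>k. k \<in> C \<Longrightarrow> 0 \<le> \<alpha> k" "\<And>k. k \<in> C \<Longrightarrow> best_reply Th A u (w k) a"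
  shows "best_reply Th A u (\<lambda>\<theta>. \<Sum>k\<in>C. \<alpha> k * w k \<theta>) a"
  unfolding best_reply_def
proof (intro conjI ballI assms(1))
  fix b assume "b \<in> A"
  have "(\<Sum>\<theta>\<in>Th. (\<Sum>k\<in>C. \<alpha> k * w k \<theta>) * u \<theta> b) = (\<Sum>k\<in>C. \<alpha> k * (\<Sum>\<theta>\<in>Th. w k \<theta> * u \<theta> b))"
    by (simp add: sum_distrib_left sum_distrib_right mult.assoc sum.swap[of _ Th])
  also have "\<dots> \<le> (\<Sum>k\<in>C. \<alpha> k * (\<Sum>\<theta>\<in>Th. w k \<theta> * u \<theta> a))"
  proof (rule sum_mono)
    fix k assume "k \<in> C"
    thus "\<alpha> k * (\<Sum>\<theta>\<in>Th. w k \<theta> * u \<theta> b) \<le> \<alpha> k * (\<Sum>\<theta>\<in>Th. w k \<theta> * u \<theta> a)"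
      using assms \<open>b \<in> A\<close> by (intro mult_left_mono) (auto simp: best_reply_def)
  qed
  also have "\<dots> = (\<Sum>\<theta>\<in>Th. (\<Sum>k\<in>C. \<alpha> k * w k \<theta>) * u \<theta> a)"
    by (simp add: sum_distrib_left sum_distrib_right mult.assoc sum.swap[of _ Th])
  finally show "(\<Sum>\<theta>\<in>Th. (\<Sum>k\<in>C. \<alpha> k * w k \<theta>) * u \<theta> b) \<le> (\<Sum>\<theta>\<in>Th. (\<Sum>k\<in>C. \<alpha> k * w k \<theta>) * u \<theta> a)" .
qed

lemma pure_strategy_in_strategies:
  assumes "finite A" "\<And>z. z \<in> Z \<Longrightarrow> act z \<in> A"
  shows "pure_strategy act \<in> strategies Z A"
  using assms by (simp add: strategies_def is_dist_def pure_strategy_def)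

lemma strategies_nonempty:
  assumes "finite A" "A \<noteq> {}"
  shows "strategies Z A \<noteq> {}"
proof -
  obtain a0 where "a0 \<in> A" using assms(2) by blast
  hence "pure_strategy (\<lambda>_. a0) \<in> strategies Z A"
    by (intro pure_strategy_in_strategies[OF assms(1)])
  thus ?thesis by blast
qed

lemma payoff_pure_strategy:
  assumes "finite A" "\<And>z. z \<in> Z \<Longrightarrow> act z \<in> A"
  shows "payoff Th Z Q A u (pure_strategy act) = (\<Sum>\<theta>\<in>Th. \<Sum>z\<in>Z. Q \<theta> z * u \<theta> (act z))"
proof -
  have "(\<Sum>a\<in>A. pure_strategy act z a * u \<theta> a) = u \<theta> (act z)" if "z \<in> Z" for z \<theta>
    using assms that by (simp add: pure_strategy_def if_distrib[of "\<lambda>x. x * _"] cong: if_cong)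
  thus ?thesis by (simp add: payoff_def)
qed

lemma payoff_abs_le:
  assumes "finite A" "\<forall>\<theta>\<in>Th. is_dist Z (Q \<theta>)" "\<sigma> \<in> strategies Z A"
  shows "\<bar>payoff Th Z Q A u \<sigma>\<bar> \<le> (\<Sum>\<theta>\<in>Th. \<Sum>a\<in>A. \<bar>u \<theta> a\<bar>)"
proof -
  have expect_le: "\<bar>\<Sum>a\<in>A. \<sigma> z a * u \<theta> a\<bar> \<le> (\<Sum>a\<in>A. \<bar>u \<theta> a\<bar>)" if "z \<in> Z" for z \<theta>
  proof -
    have \<sigma>z: "\<forall>a\<in>A. 0 \<le> \<sigma> z a" "sum (\<sigma> z) A = 1"
      using assms(3) that by (auto simp: strategies_def is_dist_def)
    have "\<sigma> z a \<le> 1" if "a \<in> A" for a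
      using member_le_sum[of a A "\<sigma> z"] \<sigma>z that assms(1) by auto
    hence "\<bar>\<sigma> z a * u \<theta> a\<bar> \<le> \<bar>u \<theta> a\<bar>" if "a \<in> A" for a
      using \<sigma>z that by (simp add: abs_mult mult_left_le_one_le)
    hence "(\<Sum>a\<in>A. \<bar>\<sigma> z a * u \<theta> a\<bar>) \<le> (\<Sum>a\<in>A. \<bar>u \<theta> a\<bar>)" by (rule sum_mono)
    thus ?thesis by (rule order.trans[OF sum_abs])
  qed
  have "\<bar>payoff Th Z Q A u \<sigma>\<bar> \<le> (\<Sum>\<theta>\<in>Th. \<Sum>z\<in>Z. \<bar>Q \<theta> z * (\<Sum>a\<in>A. \<sigma> z a * u \<theta> a)\<bar>)"
    unfolding payoff_def by (rule order.trans[OF sum_abs sum_mono[OF sum_abs]])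
  also have "\<dots> \<le> (\<Sum>\<theta>\<in>Th. \<Sum>z\<in>Z. Q \<theta> z * (\<Sum>a\<in>A. \<bar>u \<theta> a\<bar>))"
    using assms(2) expect_le
    by (intro sum_mono) (auto simp: abs_mult is_dist_def intro!: mult_left_mono)
  also have "\<dots> = (\<Sum>\<theta>\<in>Th. \<Sum>a\<in>A. \<bar>u \<theta> a\<bar>)"
    using assms(2) by (intro sum.cong refl) (simp add: is_dist_def sum_distrib_right[symmetric])
  finally show ?thesis .
qed

lemma payoff_couplings_abs_le:
  assumes "finite A" "R \<in> couplings Th I Z Q" "\<sigma> \<in> strategies (PiE I Z) A"
  shows "\<bar>payoff Th (PiE I Z) R A u \<sigma>\<bar> \<le> (\<Sum>\<theta>\<in>Th. \<Sum>a\<in>A. \<bar>u \<theta> a\<bar>)"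
  using assms(2) by (intro payoff_abs_le[OF assms(1) _ assms(3)]) (simp add: couplings_def)

lemma bdd_below_payoff_couplings:
  assumes "finite A" "\<sigma> \<in> strategies (PiE I Z) A"
  shows "bdd_below ((\<lambda>R. payoff Th (PiE I Z) R A u \<sigma>) ` couplings Th I Z Q)"
proof (rule bdd_belowI[where m="- (\<Sum>\<theta>\<in>Th. \<Sum>a\<in>A. \<bar>u \<theta> a\<bar>)"], clarify)
  fix R assume "R \<in> couplings Th I Z Q"
  from abs_le_D2[OF payoff_couplings_abs_le[OF assms(1) this assms(2), where u=u]]
  show "- (\<Sum>\<theta>\<in>Th. \<Sum>a\<in>A. \<bar>u \<theta> a\<bar>) \<le> payoff Th (PiE I Z) R A u \<sigma>" by linarith
qed

lemma couplings_sum_coord: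
  assumes "R \<in> couplings Th I Z Q" "finite I" "\<And>i. i \<in> I \<Longrightarrow> finite (Z i)" "j \<in> I" "\<theta> \<in> Th"
  shows "(\<Sum>z\<in>PiE I Z. R \<theta> z * f (z j)) = (\<Sum>y\<in>Z j. Q j \<theta> y * f y)"
proof -
  have "(\<Sum>z\<in>PiE I Z. R \<theta> z * f (z j)) = (\<Sum>y\<in>Z j. \<Sum>z\<in>{z\<in>PiE I Z. z j = y}. R \<theta> z * f (z j))"
    using assms by (intro sum.group[symmetric] finite_PiE) (auto simp: PiE_iff)
  also have "\<dots> = (\<Sum>y\<in>Z j. (\<Sum>z\<in>{z\<in>PiE I Z. z j = y}. R \<theta> z) * f y)"
    by (intro sum.cong refl) (auto simp: sum_distrib_right)
  also have "\<dots> = (\<Sum>y\<in>Z j. Q j \<theta> y * f y)"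
    using assms unfolding couplings_def by (intro sum.cong refl) auto
  finally show ?thesis .
qed

lemma couplings_marginal_is_dist:
  assumes "R \<in> couplings Th I Z Q" "finite I" "\<And>i. i \<in> I \<Longrightarrow> finite (Z i)" "j \<in> I" "\<theta> \<in> Th"
  shows "is_dist (Z j) (Q j \<theta>)"
proof -
  have "Q j \<theta> y = (\<Sum>z\<in>{z\<in>PiE I Z. z j = y}. R \<theta> z)" if "y \<in> Z j" for y
    using assms that by (simp add: couplings_def)
  moreover have "0 \<le> R \<theta> z" if "z \<in> PiE I Z" for z
    using assms that by (simp add: couplings_def is_dist_def)
  ultimately have "0 \<le> Q j \<theta> y" if "y \<in> Z j" for y
    using that by (auto intro!: sum_nonneg)
  moreover have "sum (Q j \<theta>) (Z j) = 1"
    using couplings_sum_coord[OF assms, of "\<lambda>_. 1"] assms(1,5) by (simp add: couplings_def is_dist_def)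
  ultimately show ?thesis by (simp add: is_dist_def)
qed

lemma payoff_le_pure_strategy:
  assumes R: "R \<in> couplings Th I Z Q" and fin: "finite I" "\<And>i. i \<in> I \<Longrightarrow> finite (Z i)" "finite A"
    and "1 \<in> I" and \<sigma>: "\<sigma> \<in> strategies (PiE I Z) A" and act: "\<And>y. y \<in> Z 1 \<Longrightarrow> act y \<in> A"
    and best: "\<And>z. z \<in> PiE I Z \<Longrightarrow> best_reply Th A u (\<lambda>\<theta>. R \<theta> z) (act (z 1))"
  shows "payoff Th (PiE I Z) R A u \<sigma> \<le> payoff Th (Z 1) (Q 1) A u (pure_strategy act)"
proof -
  have "payoff Th (PiE I Z) R A u \<sigma> = (\<Sum>z\<in>PiE I Z. \<Sum>\<theta>\<in>Th. R \<theta> z * (\<Sum>a\<in>A. \<sigma> z a * u \<theta> a))"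
    unfolding payoff_def by (rule sum.swap)
  also have "\<dots> \<le> (\<Sum>z\<in>PiE I Z. \<Sum>\<theta>\<in>Th. R \<theta> z * u \<theta> (act (z 1)))"
  proof (rule sum_mono)
    fix z assume z: "z \<in> PiE I Z"
    have \<sigma>z: "\<forall>a\<in>A. 0 \<le> \<sigma> z a" "sum (\<sigma> z) A = 1"
      using \<sigma> z by (auto simp: strategies_def is_dist_def)
    have "(\<Sum>\<theta>\<in>Th. R \<theta> z * (\<Sum>a\<in>A. \<sigma> z a * u \<theta> a)) = (\<Sum>a\<in>A. \<sigma> z a * (\<Sum>\<theta>\<in>Th. R \<theta> z * u \<theta> a))"
      by (simp add: sum_distrib_left mult.left_commute sum.swap[of _ Th])
    also have "\<dots> \<le> (\<Sum>a\<in>A. \<sigma> z a * (\<Sum>\<theta>\<in>Th. R \<theta> z * u \<theta> (act (z 1))))"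
    proof (rule sum_mono)
      fix a assume "a \<in> A"
      thus "\<sigma> z a * (\<Sum>\<theta>\<in>Th. R \<theta> z * u \<theta> a) \<le> \<sigma> z a * (\<Sum>\<theta>\<in>Th. R \<theta> z * u \<theta> (act (z 1)))"
        using \<sigma>z best[OF z] by (intro mult_left_mono) (auto simp: best_reply_def)
    qed
    also have "\<dots> = (\<Sum>\<theta>\<in>Th. R \<theta> z * u \<theta> (act (z 1)))"
      using \<sigma>z by (simp add: sum_distrib_right[symmetric])
    finally show "(\<Sum>\<theta>\<in>Th. R \<theta> z * (\<Sum>a\<in>A. \<sigma> z a * u \<theta> a)) \<le> \<dots>" .
  qed
  also have "\<dots> = (\<Sum>\<theta>\<in>Th. \<Sum>z\<in>PiE I Z. R \<theta> z * u \<theta> (act (z 1)))"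
    by (rule sum.swap)
  also have "\<dots> = (\<Sum>\<theta>\<in>Th. \<Sum>y\<in>Z 1. Q 1 \<theta> y * u \<theta> (act y))"
    using R fin \<open>1 \<in> I\<close> by (intro sum.cong refl couplings_sum_coord)
  also have "\<dots> = payoff Th (Z 1) (Q 1) A u (pure_strategy act)"
    using fin act by (simp add: payoff_pure_strategy)
  finally show ?thesis .
qed

lemma V_single_le_V_multi:
  assumes fin: "finite I" "\<And>i. i \<in> I \<Longrightarrow> finite (Z i)" and "1 \<in> I"
    and A: "finite A" "A \<noteq> {}" and R0: "R0 \<in> couplings Th I Z Q"
  shows "V_single Th (Z 1) (Q 1) A u \<le> V_multi Th I Z Q A u"
proof -
  have bdd_above: "bdd_above ((\<lambda>\<sigma>. INF R\<in>couplings Th I Z Q. payoff Th (PiE I Z) R A u \<sigma>)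
      ` strategies (PiE I Z) A)"
  proof (rule bdd_aboveI[where M="\<Sum>\<theta>\<in>Th. \<Sum>a\<in>A. \<bar>u \<theta> a\<bar>"], clarify)
    fix \<sigma> assume \<sigma>: "\<sigma> \<in> strategies (PiE I Z) A"
    have "(INF R\<in>couplings Th I Z Q. payoff Th (PiE I Z) R A u \<sigma>) \<le> payoff Th (PiE I Z) R0 A u \<sigma>"
      by (rule cINF_lower[OF bdd_below_payoff_couplings[OF A(1) \<sigma>] R0])
    with abs_le_D1[OF payoff_couplings_abs_le[OF A(1) R0 \<sigma>, where u=u]]
    show "(INF R\<in>couplings Th I Z Q. payoff Th (PiE I Z) R A u \<sigma>) \<le> (\<Sum>\<theta>\<in>Th. \<Sum>a\<in>A. \<bar>u \<theta> a\<bar>)"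
      by linarith
  qed
  show ?thesis
    unfolding V_single_def
  proof (rule cSUP_least)
    show "strategies (Z 1) A \<noteq> {}" by (rule strategies_nonempty[OF A])
    fix \<sigma> assume \<sigma>: "\<sigma> \<in> strategies (Z 1) A"
    have \<sigma>': "(\<lambda>z. \<sigma> (z 1)) \<in> strategies (PiE I Z) A"
      using \<sigma> \<open>1 \<in> I\<close> by (simp add: strategies_def PiE_iff)
    have "payoff Th (Z 1) (Q 1) A u \<sigma> = (INF R\<in>couplings Th I Z Q. payoff Th (Z 1) (Q 1) A u \<sigma>)"
      using R0 by (intro cINF_const[symmetric]) blast
    also have "\<dots> = (INF R\<in>couplings Th I Z Q. payoff Th (PiE I Z) R A u (\<lambda>z. \<sigma> (z 1)))"
      unfolding payoff_def
    proof (intro INF_cong refl sum.cong)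
      show "(\<Sum>y\<in>Z 1. Q 1 \<theta> y * (\<Sum>a\<in>A. \<sigma> y a * u \<theta> a))
          = (\<Sum>z\<in>PiE I Z. R \<theta> z * (\<Sum>a\<in>A. \<sigma> (z 1) a * u \<theta> a))"
        if "R \<in> couplings Th I Z Q" "\<theta> \<in> Th" for R \<theta>
        using couplings_sum_coord[OF that(1) fin \<open>1 \<in> I\<close> that(2), of "\<lambda>y. \<Sum>a\<in>A. \<sigma> y a * u \<theta> a"]
        by simp
    qed
    also have "\<dots> \<le> V_multi Th I Z Q A u"
      unfolding V_multi_def by (rule cSUP_upper[OF \<sigma>' bdd_above])
    finally show "payoff Th (Z 1) (Q 1) A u \<sigma> \<le> V_multi Th I Z Q A u" .
  qed
qed

lemma V_multi_le_V_single:
  assumes fin: "finite I" "\<And>i. i \<in> I \<Longrightarrow> finite (Z i)" and "1 \<in> I"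
    and A: "finite A" "A \<noteq> {}" and R: "R \<in> couplings Th I Z Q"
    and act: "\<And>y. y \<in> Z 1 \<Longrightarrow> act y \<in> A"
    and best: "\<And>z. z \<in> PiE I Z \<Longrightarrow> best_reply Th A u (\<lambda>\<theta>. R \<theta> z) (act (z 1))"
  shows "V_multi Th I Z Q A u \<le> V_single Th (Z 1) (Q 1) A u"
proof -
  have "\<forall>\<theta>\<in>Th. is_dist (Z 1) (Q 1 \<theta>)"
    using couplings_marginal_is_dist[OF R fin \<open>1 \<in> I\<close>] by blast
  from abs_le_D1[OF payoff_abs_le[OF A(1) this, where u=u]]
  have bdd_above: "bdd_above ((\<lambda>\<sigma>. payoff Th (Z 1) (Q 1) A u \<sigma>) ` strategies (Z 1) A)"
    by (intro bdd_aboveI[where M="\<Sum>\<theta>\<in>Th. \<Sum>a\<in>A. \<bar>u \<theta> a\<bar>"]) auto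
  show ?thesis
    unfolding V_multi_def
  proof (rule cSUP_least)
    show "strategies (PiE I Z) A \<noteq> {}" by (rule strategies_nonempty[OF A])
    fix \<sigma> assume \<sigma>: "\<sigma> \<in> strategies (PiE I Z) A"
    have "(INF R\<in>couplings Th I Z Q. payoff Th (PiE I Z) R A u \<sigma>) \<le> payoff Th (PiE I Z) R A u \<sigma>"
      by (rule cINF_lower[OF bdd_below_payoff_couplings[OF A(1) \<sigma>] R])
    also have "\<dots> \<le> payoff Th (Z 1) (Q 1) A u (pure_strategy act)"
      by (rule payoff_le_pure_strategy[OF R fin A(1) \<open>1 \<in> I\<close> \<sigma> act best])
    also have "\<dots> \<le> V_single Th (Z 1) (Q 1) A u"
      unfolding V_single_def
      by (rule cSUP_upper[OF pure_strategy_in_strategies[OF A(1) act] bdd_above])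
    finally show "(INF R\<in>couplings Th I Z Q. payoff Th (PiE I Z) R A u \<sigma>) \<le> V_single Th (Z 1) (Q 1) A u" .
  qed
qed

section \<open>Coupling along likelihood-ratio components\<close>

lemma exists_lex_max:
  fixes f g :: "'a \<Rightarrow> real"
  assumes "finite A" "A \<noteq> {}"
  shows "\<exists>a\<in>A. \<exists>r\<ge>1. \<forall>b\<in>A. f b \<le> f a \<and> r * f b + g b \<le> r * f a + g a"
proof -
  define A1 where "A1 = {a\<in>A. f a = Max (f ` A)}"
  have "Max (f ` A) \<in> f ` A" using assms by simp
  hence "A1 \<noteq> {}" "finite A1" using assms(1) by (auto simp: A1_def)
  hence "Max (g ` A1) \<in> g ` A1" by simp
  then obtain a where a: "a \<in> A1" "g a = Max (g ` A1)" by (auto simp del: Max_in)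
  have f_le: "f b \<le> f a" if "b \<in> A" for b using that a assms(1) by (simp add: A1_def)
  define r where "r = 1 + (\<Sum>b\<in>A - A1. \<bar>(g b - g a) / (f a - f b)\<bar>)"
  have "1 \<le> r" by (simp add: r_def sum_nonneg)
  moreover have "r * f b + g b \<le> r * f a + g a" if "b \<in> A" for b
  proof (cases "b \<in> A1")
    case True
    thus ?thesis using a \<open>finite A1\<close> by (simp add: A1_def)
  next
    case False
    hence "f b < f a" using f_le[OF that] that a by (auto simp: A1_def)
    have "(g b - g a) / (f a - f b) \<le> \<bar>(g b - g a) / (f a - f b)\<bar>" by (rule abs_ge_self)
    also have "\<dots> \<le> (\<Sum>b\<in>A - A1. \<bar>(g b - g a) / (f a - f b)\<bar>)"
      using False that assms(1) by (intro member_le_sum) auto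
    also have "\<dots> = r - 1" by (simp add: r_def)
    finally have "g b - g a \<le> (r - 1) * (f a - f b)" using \<open>f b < f a\<close> by (simp add: divide_le_eq)
    moreover have "(r - 1) * (f a - f b) \<le> r * (f a - f b)" using \<open>f b < f a\<close> by simp
    ultimately show ?thesis by (simp add: algebra_simps)
  qed
  moreover have "a \<in> A" using a by (simp add: A1_def)
  ultimately show ?thesis using f_le by blast
qed

lemma exists_best_reply:
  assumes "finite A" "A \<noteq> {}"
  shows "\<exists>a. best_reply Th A u w a"
proof -
  obtain a where "a \<in> A" "\<forall>b\<in>A. (\<lambda>a. \<Sum>\<theta>\<in>Th. w \<theta> * u \<theta> a) b \<le> (\<lambda>a. \<Sum>\<theta>\<in>Th. w \<theta> * u \<theta> a) a"
    using exists_lex_max[OF assms, of "\<lambda>a. \<Sum>\<theta>\<in>Th. w \<theta> * u \<theta> a" "\<lambda>_. 0"] by blast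
  thus ?thesis by (auto simp: best_reply_def)
qed

lemma sum_Theta_other: "\<theta> \<in> Theta \<Longrightarrow> (\<Sum>\<theta>'\<in>Theta. f \<theta>') = f \<theta> + f (3 - \<theta>)"
  by (auto simp: Theta_def add.commute)

lemma exists_best_reply_large_ratio:
  assumes "finite A" "A \<noteq> {}" "\<theta> \<in> Theta"
  shows "\<exists>a r. 1 \<le> r \<and> (\<forall>w. 0 \<le> w (3 - \<theta>) \<longrightarrow> r * w (3 - \<theta>) \<le> w \<theta> \<longrightarrow> best_reply Theta A u w a)"
proof -
  obtain a r where a: "a \<in> A" "1 \<le> r"
    and dom: "\<And>b. b \<in> A \<Longrightarrow> u \<theta> b \<le> u \<theta> a \<and> r * u \<theta> b + u (3 - \<theta>) b \<le> r * u \<theta> a + u (3 - \<theta>) a"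
    using exists_lex_max[OF assms(1,2), of "u \<theta>" "u (3 - \<theta>)"] by blast
  have "best_reply Theta A u w a" if "0 \<le> w (3 - \<theta>)" "r * w (3 - \<theta>) \<le> w \<theta>" for w
    unfolding best_reply_def sum_Theta_other[OF assms(3)]
  proof (intro conjI ballI a(1))
    fix b assume "b \<in> A"
    have "w \<theta> * u \<theta> b + w (3 - \<theta>) * u (3 - \<theta>) b
        = (w \<theta> - r * w (3 - \<theta>)) * u \<theta> b + w (3 - \<theta>) * (r * u \<theta> b + u (3 - \<theta>) b)"
      by (simp add: algebra_simps)
    also have "\<dots> \<le> (w \<theta> - r * w (3 - \<theta>)) * u \<theta> a + w (3 - \<theta>) * (r * u \<theta> a + u (3 - \<theta>) a)"
      using dom[OF \<open>b \<in> A\<close>] that by (intro add_mono[OF mult_left_mono mult_left_mono]) auto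
    also have "\<dots> = w \<theta> * u \<theta> a + w (3 - \<theta>) * u (3 - \<theta>) a"
      by (simp add: algebra_simps)
    finally show "w \<theta> * u \<theta> b + w (3 - \<theta>) * u (3 - \<theta>) b \<le> w \<theta> * u \<theta> a + w (3 - \<theta>) * u (3 - \<theta>) a" .
  qed
  thus ?thesis using a(2) by blast
qed

lemma sum_mixture_fixed_coord:
  fixes f :: "'k \<Rightarrow> 'z \<Rightarrow> real" and d :: "'k \<Rightarrow> nat \<Rightarrow> 'z \<Rightarrow> real"
  assumes fin: "finite I" "\<And>i. i \<in> I \<Longrightarrow> finite (Z i)" and "1 \<in> I"
    and d_sum: "\<And>k i. k \<in> C \<Longrightarrow> i \<in> I - {1} \<Longrightarrow> sum (d k i) (Z i) = 1"
    and "j \<in> I" "w \<in> Z j"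
  shows "(\<Sum>z\<in>{z\<in>PiE I Z. z j = w}. \<Sum>k\<in>C. f k (z 1) * (\<Prod>i\<in>I - {1}. d k i (z i)))
           = (if j = 1 then (\<Sum>k\<in>C. f k w) else (\<Sum>k\<in>C. sum (f k) (Z 1) * d k j w))"
proof -
  define h where "h k i = (if i = 1 then f k else d k i)" for k i
  have prod_h: "(\<Prod>i\<in>I. h k i (z i)) = f k (z 1) * (\<Prod>i\<in>I - {1}. d k i (z i))" for k z
  proof -
    have "(\<Prod>i\<in>I - {1}. h k i (z i)) = (\<Prod>i\<in>I - {1}. d k i (z i))"
      by (intro prod.cong) (auto simp: h_def)
    thus ?thesis using prod.remove[OF fin(1) \<open>1 \<in> I\<close>, of "\<lambda>i. h k i (z i)"] by (simp add: h_def)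
  qed
  have prod_sum_h: "(\<Prod>i\<in>J. \<Sum>y\<in>Z i. h k i y) = 1" if "k \<in> C" "J \<subseteq> I - {1}" for k J
    using d_sum[OF that(1)] that(2) by (intro prod.neutral) (auto simp: h_def)
  have "(\<Sum>z\<in>{z\<in>PiE I Z. z j = w}. \<Sum>k\<in>C. f k (z 1) * (\<Prod>i\<in>I - {1}. d k i (z i)))
      = (\<Sum>k\<in>C. \<Sum>z\<in>{z\<in>PiE I Z. z j = w}. \<Prod>i\<in>I. h k i (z i))"
    by (simp add: prod_h sum.swap[of _ C])
  also have "\<dots> = (\<Sum>k\<in>C. h k j w * (\<Prod>i\<in>I - {j}. \<Sum>y\<in>Z i. h k i y))"
    using sum_PiE_prod_fixed_coord[where Z=Z, OF fin assms(5,6)] by simp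
  also have "\<dots> = (if j = 1 then (\<Sum>k\<in>C. f k w) else (\<Sum>k\<in>C. sum (f k) (Z 1) * d k j w))"
  proof (cases "j = 1")
    case True
    thus ?thesis using prod_sum_h[of _ "I - {1}"] by (simp add: h_def)
  next
    case False
    have "(\<Prod>i\<in>I - {j}. \<Sum>y\<in>Z i. h k i y) = sum (f k) (Z 1)" if "k \<in> C" for k
    proof -
      have "(\<Prod>i\<in>I - {j}. \<Sum>y\<in>Z i. h k i y)
          = (\<Sum>y\<in>Z 1. h k 1 y) * (\<Prod>i\<in>I - {j} - {1}. \<Sum>y\<in>Z i. h k i y)"
        using fin \<open>1 \<in> I\<close> False by (intro prod.remove) auto
      also have "(\<Prod>i\<in>I - {j} - {1}. \<Sum>y\<in>Z i. h k i y) = 1" by (rule prod_sum_h[OF that]) auto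
      finally show ?thesis by (simp add: h_def)
    qed
    thus ?thesis using False by (simp add: h_def mult.commute)
  qed
  finally show ?thesis .
qed

lemma mixture_in_couplings:
  fixes f d :: "'k \<Rightarrow> nat \<Rightarrow> 'z \<Rightarrow> real"
  assumes fin: "finite I" "\<And>i. i \<in> I \<Longrightarrow> finite (Z i)" and "1 \<in> I"
    and f_nonneg: "\<And>k \<theta> y. k \<in> C \<Longrightarrow> \<theta> \<in> Th \<Longrightarrow> y \<in> Z 1 \<Longrightarrow> 0 \<le> f k \<theta> y"
    and d_dist: "\<And>k i. k \<in> C \<Longrightarrow> i \<in> I - {1} \<Longrightarrow> is_dist (Z i) (d k i)"
    and Q1: "\<And>\<theta>. \<theta> \<in> Th \<Longrightarrow> is_dist (Z 1) (Q 1 \<theta>)"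
    and Q1_eq: "\<And>\<theta> y. \<theta> \<in> Th \<Longrightarrow> y \<in> Z 1 \<Longrightarrow> Q 1 \<theta> y = (\<Sum>k\<in>C. f k \<theta> y)"
    and Qi_eq: "\<And>\<theta> i y. \<theta> \<in> Th \<Longrightarrow> i \<in> I - {1} \<Longrightarrow> y \<in> Z i \<Longrightarrow>
                  Q i \<theta> y = (\<Sum>k\<in>C. sum (f k \<theta>) (Z 1) * d k i y)"
  shows "(\<lambda>\<theta> z. \<Sum>k\<in>C. f k \<theta> (z 1) * (\<Prod>i\<in>I - {1}. d k i (z i))) \<in> couplings Th I Z Q"
proof -
  define R where "R \<theta> z = (\<Sum>k\<in>C. f k \<theta> (z 1) * (\<Prod>i\<in>I - {1}. d k i (z i)))" for \<theta> z
  have d_sum: "\<And>k i. k \<in> C \<Longrightarrow> i \<in> I - {1} \<Longrightarrow> sum (d k i) (Z i) = 1"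
    using d_dist by (simp add: is_dist_def)
  have marginal: "(\<Sum>z\<in>{z\<in>PiE I Z. z j = w}. R \<theta> z) = Q j \<theta> w"
    if "\<theta> \<in> Th" "j \<in> I" "w \<in> Z j" for \<theta> j w
    using sum_mixture_fixed_coord[where Z=Z and f="\<lambda>k. f k \<theta>", OF fin \<open>1 \<in> I\<close> d_sum that(2,3)]
      that Q1_eq Qi_eq
    by (auto simp: R_def)
  have R_nonneg: "0 \<le> R \<theta> z" if "\<theta> \<in> Th" "z \<in> PiE I Z" for \<theta> z
    unfolding R_def
  proof (intro sum_nonneg mult_nonneg_nonneg prod_nonneg)
    fix k assume "k \<in> C"
    show "0 \<le> f k \<theta> (z 1)" using f_nonneg[OF \<open>k \<in> C\<close> that(1)] that(2) \<open>1 \<in> I\<close> by auto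
    show "0 \<le> d k i (z i)" if "i \<in> I - {1}" for i
      using d_dist[OF \<open>k \<in> C\<close> that] \<open>z \<in> PiE I Z\<close> that by (auto simp: is_dist_def)
  qed
  have R_sum: "sum (R \<theta>) (PiE I Z) = 1" if "\<theta> \<in> Th" for \<theta>
  proof -
    have "sum (R \<theta>) (PiE I Z) = (\<Sum>y\<in>Z 1. \<Sum>z\<in>{z\<in>PiE I Z. z 1 = y}. R \<theta> z)"
      using fin \<open>1 \<in> I\<close> by (intro sum.group[symmetric] finite_PiE) (auto simp: PiE_iff)
    thus ?thesis using marginal[OF that \<open>1 \<in> I\<close>] Q1[OF that] by (simp add: is_dist_def)
  qed
  show ?thesis
    using R_nonneg R_sum marginal by (simp add: couplings_def is_dist_def R_def[abs_def])
qed

lemma exists_common_component: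
  assumes Z: "finite Z" and q: "\<And>\<theta>. \<theta> \<in> Theta \<Longrightarrow> is_dist Z (q \<theta>)" and M: "0 < overlap Z q"
    and s: "\<And>\<theta>. \<theta> \<in> Theta \<Longrightarrow> 0 \<le> s \<theta> \<and> s \<theta> \<le> overlap Z q"
  shows "\<exists>c e. is_dist Z c \<and> (\<forall>\<theta>\<in>Theta. is_dist Z (e \<theta>))
           \<and> (\<forall>\<theta>\<in>Theta. \<forall>y\<in>Z. q \<theta> y = s \<theta> * c y + (1 - s \<theta>) * e \<theta> y)"
proof -
  define c where "c y = min (q 1 y) (q 2 y) / overlap Z q" for y
  define e where "e \<theta> = (if s \<theta> = 1 then c else (\<lambda>y. (q \<theta> y - s \<theta> * c y) / (1 - s \<theta>)))" for \<theta>
  have T: "1 \<in> Theta" "2 \<in> Theta" by (simp_all add: Theta_def)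
  have min_le: "min (q 1 y) (q 2 y) \<le> q \<theta> y" if "\<theta> \<in> Theta" for \<theta> y
    using that by (auto simp: Theta_def)
  have c_dist: "is_dist Z c"
    using q[OF T(1)] q[OF T(2)] M by (auto simp: is_dist_def c_def overlap_def sum_divide_distrib[symmetric])
  have "overlap Z q \<le> sum (q 1) Z"
    unfolding overlap_def using min_le[OF T(1)] by (intro sum_mono) auto
  hence s_le_1: "s \<theta> \<le> 1" if "\<theta> \<in> Theta" for \<theta>
    using s[OF that] q[OF T(1)] by (simp add: is_dist_def)
  have sc_le: "s \<theta> * c y \<le> q \<theta> y" if "\<theta> \<in> Theta" "y \<in> Z" for \<theta> y
  proof -
    have "s \<theta> * c y = min (q 1 y) (q 2 y) * (s \<theta> / overlap Z q)" by (simp add: c_def)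
    also have "\<dots> \<le> min (q 1 y) (q 2 y) * 1"
      using q[OF T(1)] q[OF T(2)] s[OF that(1)] M that(2)
      by (intro mult_left_mono) (auto simp: is_dist_def)
    finally show ?thesis using min_le[OF that(1), of y] by linarith
  qed
  have "is_dist Z (e \<theta>) \<and> (\<forall>y\<in>Z. q \<theta> y = s \<theta> * c y + (1 - s \<theta>) * e \<theta> y)" if "\<theta> \<in> Theta" for \<theta>
  proof (cases "s \<theta> = 1")
    case True
    have "sum (\<lambda>y. q \<theta> y - c y) Z = 0"
      using q[OF that] c_dist by (simp add: sum_subtractf is_dist_def)
    hence "\<forall>y\<in>Z. q \<theta> y - c y = 0"
      using sum_nonneg_eq_0_iff[OF Z, of "\<lambda>y. q \<theta> y - c y"] sc_le[OF that] True by simp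
    thus ?thesis using True c_dist by (simp add: e_def)
  next
    case False
    hence "s \<theta> < 1" using s_le_1[OF that] by simp
    moreover have "sum (\<lambda>y. q \<theta> y - s \<theta> * c y) Z = 1 - s \<theta>"
      using q[OF that] c_dist by (simp add: sum_subtractf is_dist_def sum_distrib_left[symmetric])
    ultimately show ?thesis
      using False sc_le[OF that]
      by (simp add: e_def is_dist_def sum_divide_distrib[symmetric])
  qed
  thus ?thesis using c_dist by blast
qed

(* 3 - \<theta> is the state other than \<theta>. *)
definition balanced_part :: "(nat \<Rightarrow> real) \<Rightarrow> (nat \<Rightarrow> 'y \<Rightarrow> real) \<Rightarrow> nat \<Rightarrow> 'y \<Rightarrow> real" where
  "balanced_part r x \<theta> y = min (x \<theta> y) (r \<theta> * x (3 - \<theta>) y)"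

(* Component k \<in> {1, 2} is the excess likelihood of state k; it has no weight under the other
   state. *)
definition ratio_component :: "(nat \<Rightarrow> real) \<Rightarrow> (nat \<Rightarrow> 'y \<Rightarrow> real) \<Rightarrow> nat \<Rightarrow> nat \<Rightarrow> 'y \<Rightarrow> real" where
  "ratio_component r x k \<theta> y =
     (if k = 0 then balanced_part r x \<theta> y else if \<theta> = k then x \<theta> y - balanced_part r x \<theta> y else 0)"

lemma ratio_component_nonneg:
  assumes "\<theta> \<in> Theta" "0 \<le> x 1 y" "0 \<le> x 2 y" "0 \<le> r \<theta>"
  shows "0 \<le> ratio_component r x k \<theta> y"
  using assms by (auto simp: ratio_component_def balanced_part_def Theta_def)

lemma sum_ratio_component:
  "(\<Sum>k\<in>{0, 1, 2}. ratio_component r x k \<theta> y) = x \<theta> y" if "\<theta> \<in> Theta"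
  using that by (auto simp: ratio_component_def Theta_def)

lemma sum_ratio_component_signals:
  assumes "\<theta> \<in> Theta" "sum (x \<theta>) Y = 1"
  shows "sum (ratio_component r x k \<theta>) Y =
    (if k = 0 then sum (balanced_part r x \<theta>) Y else if \<theta> = k then 1 - sum (balanced_part r x \<theta>) Y else 0)"
  using assms by (auto simp: ratio_component_def sum_subtractf)

lemma balanced_part_le:
  assumes "\<theta> \<in> Theta" "0 \<le> x 1 y" "0 \<le> x 2 y" "1 \<le> r 1" "1 \<le> r 2"
  shows "balanced_part r x \<theta> y \<le> (r 1 + r 2) * min (x 1 y) (x 2 y)"
proof -
  have "min (x \<theta> y) (r \<theta> * x (3 - \<theta>) y) \<le> r \<theta> * min (x \<theta> y) (x (3 - \<theta>) y)"
    using assms by (auto simp: Theta_def min_def mult_le_cancel_right1 intro: order_trans)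
  also have "\<dots> \<le> (r 1 + r 2) * min (x \<theta> y) (x (3 - \<theta>) y)"
    using assms by (intro mult_right_mono) (auto simp: Theta_def)
  also have "min (x \<theta> y) (x (3 - \<theta>) y) = min (x 1 y) (x 2 y)"
    using assms(1) by (auto simp: Theta_def min.commute)
  finally show ?thesis by (simp add: balanced_part_def)
qed

lemma exists_best_reply_ratio_components:
  assumes A: "finite A" "A \<noteq> {}" and x: "0 \<le> x 1 y" "0 \<le> x 2 y" and r: "\<And>\<theta>. \<theta> \<in> Theta \<Longrightarrow> 1 \<le> r \<theta>"
    and a: "\<And>\<theta> w. \<theta> \<in> Theta \<Longrightarrow> 0 \<le> w (3 - \<theta>) \<Longrightarrow> r \<theta> * w (3 - \<theta>) \<le> w \<theta> \<Longrightarrow>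
              best_reply Theta A u w (a \<theta>)"
  shows "\<exists>b. \<forall>k. best_reply Theta A u (\<lambda>\<theta>. ratio_component r x k \<theta> y) b"
proof (cases "\<exists>\<theta>\<in>Theta. r \<theta> * x (3 - \<theta>) y < x \<theta> y")
  case True
  then obtain \<theta> where \<theta>: "\<theta> \<in> Theta" "r \<theta> * x (3 - \<theta>) y < x \<theta> y" by blast
  have other: "3 - \<theta> \<in> Theta" "3 - (3 - \<theta>) = \<theta>" "3 - \<theta> \<noteq> \<theta>" using \<theta>(1) by (auto simp: Theta_def)
  have x_nonneg: "0 \<le> x \<theta>' y" if "\<theta>' \<in> Theta" for \<theta>'
    using that x by (auto simp: Theta_def)
  have "x (3 - \<theta>) y \<le> r \<theta> * x (3 - \<theta>) y"
    using r[OF \<theta>(1)] x_nonneg[OF other(1)] by (simp add: mult_le_cancel_right1)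
  also have "\<dots> \<le> x \<theta> y" using \<theta>(2) by simp
  also have "\<dots> \<le> r (3 - \<theta>) * x \<theta> y"
    using r[OF other(1)] x_nonneg[OF \<theta>(1)] by (simp add: mult_le_cancel_right1)
  finally have bal_other: "balanced_part r x (3 - \<theta>) y = x (3 - \<theta>) y"
    using other(2) by (simp add: balanced_part_def)
  have "best_reply Theta A u (\<lambda>\<theta>'. ratio_component r x k \<theta>' y) (a \<theta>)" for k
  proof (rule a[OF \<theta>(1)])
    show "0 \<le> ratio_component r x k (3 - \<theta>) y"
      using other(1) x r[OF other(1)] by (intro ratio_component_nonneg) auto
    show "r \<theta> * ratio_component r x k (3 - \<theta>) y \<le> ratio_component r x k \<theta> y"
      using bal_other \<theta> other ratio_component_nonneg[where x=x and y=y, OF \<theta>(1) x, of r k] r[OF \<theta>(1)]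
      by (auto simp: ratio_component_def balanced_part_def)
  qed
  thus ?thesis by blast
next
  case False
  hence component: "ratio_component r x k \<theta> y = (if k = 0 then x \<theta> y else 0)" if "\<theta> \<in> Theta" for k \<theta>
    using that by (auto simp: ratio_component_def balanced_part_def not_less)
  obtain b where b: "best_reply Theta A u (\<lambda>\<theta>. x \<theta> y) b" using exists_best_reply[OF A] by blast
  have "best_reply Theta A u (\<lambda>\<theta>. ratio_component r x k \<theta> y) b" for k
    using b by (cases "k = 0") (simp_all add: best_reply_def component cong: sum.cong)
  thus ?thesis by blast
qed

lemma sum_balanced_part_bounds:
  assumes x: "is_experiment Theta Y x" and "\<theta> \<in> Theta" "1 \<le> r 1" "1 \<le> r 2"
  shows "0 \<le> sum (balanced_part r x \<theta>) Y" and "sum (balanced_part r x \<theta>) Y \<le> (r 1 + r 2) * overlap Y x"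
proof -
  note x = is_experiment_ThetaD[OF x]
  show "0 \<le> sum (balanced_part r x \<theta>) Y"
    using x assms(2-4) by (auto simp: balanced_part_def Theta_def intro!: sum_nonneg)
  have "sum (balanced_part r x \<theta>) Y \<le> (\<Sum>y\<in>Y. (r 1 + r 2) * min (x 1 y) (x 2 y))"
    using x assms(2-4) by (intro sum_mono balanced_part_le) auto
  thus "sum (balanced_part r x \<theta>) Y \<le> (r 1 + r 2) * overlap Y x"
    by (simp add: overlap_def sum_distrib_left)
qed

(* Given the component k of the first signal, the other signals are drawn independently of the
   state: from the common part of exists_common_component if k = 0, from its remainder for state
   k otherwise. *)
lemma exists_ratio_coupling:
  assumes I: "finite I" "1 \<in> I" and Q: "\<And>i. i \<in> I \<Longrightarrow> is_experiment Theta (Z i) (Q i)"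
    and r: "\<And>\<theta>. \<theta> \<in> Theta \<Longrightarrow> 1 \<le> r \<theta>"
    and dom: "\<And>i. i \<in> I - {1} \<Longrightarrow>
                (r 1 + r 2) * overlap (Z 1) (Q 1) \<le> overlap (Z i) (Q i) \<and> 0 < overlap (Z i) (Q i)"
  obtains d where "\<And>k i. k \<in> {0, 1, 2} \<Longrightarrow> i \<in> I - {1} \<Longrightarrow> is_dist (Z i) (d k i)"
    and "(\<lambda>\<theta> z. \<Sum>k\<in>{0, 1, 2}. ratio_component r (Q 1) k \<theta> (z 1) * (\<Prod>i\<in>I - {1}. d k i (z i)))
           \<in> couplings Theta I Z Q"
proof -
  note Q1 = is_experiment_ThetaD[OF Q[OF I(2)]]
  define s where "s \<theta> = sum (balanced_part r (Q 1) \<theta>) (Z 1)" for \<theta>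
  have r12: "1 \<le> r 1" "1 \<le> r 2" using r by (simp_all add: Theta_def)
  have s: "0 \<le> s \<theta> \<and> s \<theta> \<le> overlap (Z i) (Q i)" if "i \<in> I - {1}" "\<theta> \<in> Theta" for i \<theta>
    using sum_balanced_part_bounds[OF Q[OF I(2)] that(2) r12] dom[OF that(1)] by (simp add: s_def)
  have "\<exists>c e. is_dist (Z i) c \<and> (\<forall>\<theta>\<in>Theta. is_dist (Z i) (e \<theta>))
      \<and> (\<forall>\<theta>\<in>Theta. \<forall>y\<in>Z i. Q i \<theta> y = s \<theta> * c y + (1 - s \<theta>) * e \<theta> y)" if "i \<in> I - {1}" for i
  proof -
    have "finite (Z i)" "\<And>\<theta>. \<theta> \<in> Theta \<Longrightarrow> is_dist (Z i) (Q i \<theta>)"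
      using Q[of i] that by (auto simp: is_experiment_def)
    thus ?thesis using dom[OF that] s[OF that] by (intro exists_common_component) auto
  qed
  then obtain c e where ce: "\<And>i. i \<in> I - {1} \<Longrightarrow> is_dist (Z i) (c i) \<and> (\<forall>\<theta>\<in>Theta. is_dist (Z i) (e i \<theta>))
      \<and> (\<forall>\<theta>\<in>Theta. \<forall>y\<in>Z i. Q i \<theta> y = s \<theta> * c i y + (1 - s \<theta>) * e i \<theta> y)"
    by metis
  define d where "d k i = (if k = 0 then c i else e i k)" for k i
  have d_dist: "is_dist (Z i) (d k i)" if "k \<in> {0, 1, 2}" "i \<in> I - {1}" for k i
    using ce[OF that(2)] that(1) by (auto simp: d_def Theta_def)
  have "(\<lambda>\<theta> z. \<Sum>k\<in>{0, 1, 2}. ratio_component r (Q 1) k \<theta> (z 1) * (\<Prod>i\<in>I - {1}. d k i (z i)))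
      \<in> couplings Theta I Z Q"
  proof (rule mixture_in_couplings)
    show "finite I" "1 \<in> I" by (fact I)+
    show "finite (Z i)" if "i \<in> I" for i using Q[OF that] by (simp add: is_experiment_def)
    show "0 \<le> ratio_component r (Q 1) k \<theta> y" if "\<theta> \<in> Theta" "y \<in> Z 1" for k \<theta> y
      using that Q1 r[OF that(1)] by (intro ratio_component_nonneg) auto
    show "is_dist (Z 1) (Q 1 \<theta>)" if "\<theta> \<in> Theta" for \<theta>
      using Q[OF I(2)] that by (simp add: is_experiment_def)
    show "Q 1 \<theta> y = (\<Sum>k\<in>{0, 1, 2}. ratio_component r (Q 1) k \<theta> y)" if "\<theta> \<in> Theta" for \<theta> y
      using sum_ratio_component[OF that, of r "Q 1" y] by simp
    show "Q i \<theta> y = (\<Sum>k\<in>{0, 1, 2}. sum (ratio_component r (Q 1) k \<theta>) (Z 1) * d k i y)"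
      if "\<theta> \<in> Theta" "i \<in> I - {1}" "y \<in> Z i" for \<theta> i y
      using that ce[OF that(2)] Q1(4,5)
      by (auto simp: sum_ratio_component_signals s_def d_def Theta_def)
  qed (use d_dist in auto)
  thus ?thesis using that d_dist by blast
qed

lemma exists_overlap_domination_factor:
  fixes A :: "'a set" and u :: "nat \<Rightarrow> 'a \<Rightarrow> real"
  assumes A: "finite A" "A \<noteq> {}"
  obtains K where "\<And>I (Z :: nat \<Rightarrow> 'z set) Q. finite I \<Longrightarrow> 1 \<in> I \<Longrightarrow>
      (\<And>i. i \<in> I \<Longrightarrow> is_experiment Theta (Z i) (Q i)) \<Longrightarrow>
      (\<And>i. i \<in> I - {1} \<Longrightarrow> K * overlap (Z 1) (Q 1) \<le> overlap (Z i) (Q i) \<and> 0 < overlap (Z i) (Q i)) \<Longrightarrow>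
      V_multi Theta I Z Q A u = V_single Theta (Z 1) (Q 1) A u"
proof -
  obtain a r where r: "\<And>\<theta>. \<theta> \<in> Theta \<Longrightarrow> 1 \<le> r \<theta>"
    and a: "\<And>\<theta> w. \<theta> \<in> Theta \<Longrightarrow> 0 \<le> w (3 - \<theta>) \<Longrightarrow> r \<theta> * w (3 - \<theta>) \<le> w \<theta> \<Longrightarrow>
              best_reply Theta A u w (a \<theta>)"
    using exists_best_reply_large_ratio[OF A, of _ u] by metis
  show ?thesis
  proof (rule that[of "r 1 + r 2"])
    fix I and Z :: "nat \<Rightarrow> 'z set" and Q
    assume I: "finite I" "1 \<in> I" and Q: "\<And>i. i \<in> I \<Longrightarrow> is_experiment Theta (Z i) (Q i)"
      and dom: "\<And>i. i \<in> I - {1} \<Longrightarrow>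
                  (r 1 + r 2) * overlap (Z 1) (Q 1) \<le> overlap (Z i) (Q i) \<and> 0 < overlap (Z i) (Q i)"
    have fin: "finite I" "\<And>i. i \<in> I \<Longrightarrow> finite (Z i)" using I Q by (auto simp: is_experiment_def)
    obtain d where d: "\<And>k i. k \<in> {0, 1, 2} \<Longrightarrow> i \<in> I - {1} \<Longrightarrow> is_dist (Z i) (d k i)"
      and R: "(\<lambda>\<theta> z. \<Sum>k\<in>{0, 1, 2}. ratio_component r (Q 1) k \<theta> (z 1) * (\<Prod>i\<in>I - {1}. d k i (z i)))
                \<in> couplings Theta I Z Q"
      using exists_ratio_coupling[where Z=Z and Q=Q and r=r, OF I Q r dom] by blast
    define act where "act y = (SOME b. \<forall>k. best_reply Theta A u (\<lambda>\<theta>. ratio_component r (Q 1) k \<theta> y) b)" for y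
    have act: "best_reply Theta A u (\<lambda>\<theta>. ratio_component r (Q 1) k \<theta> y) (act y)" if "y \<in> Z 1" for k y
    proof -
      have "0 \<le> Q 1 1 y" "0 \<le> Q 1 2 y" using is_experiment_ThetaD[OF Q[OF I(2)]] that by auto
      from someI_ex[OF exists_best_reply_ratio_components[where x="Q 1", OF A this r a]]
      show ?thesis by (simp add: act_def)
    qed
    have act_A: "act y \<in> A" if "y \<in> Z 1" for y using act[OF that, of 0] by (simp add: best_reply_def)
    have best: "best_reply Theta A u (\<lambda>\<theta>. \<Sum>k\<in>{0, 1, 2}.
        ratio_component r (Q 1) k \<theta> (z 1) * (\<Prod>i\<in>I - {1}. d k i (z i))) (act (z 1))"
      if "z \<in> PiE I Z" for z
    proof -
      have "z 1 \<in> Z 1" "\<And>i. i \<in> I \<Longrightarrow> z i \<in> Z i" using that I(2) by auto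
      hence "best_reply Theta A u (\<lambda>\<theta>. \<Sum>k\<in>{0, 1, 2}.
          (\<Prod>i\<in>I - {1}. d k i (z i)) * ratio_component r (Q 1) k \<theta> (z 1)) (act (z 1))"
        using d act act_A by (intro best_reply_sum prod_nonneg) (auto simp: is_dist_def)
      thus ?thesis by (simp add: mult.commute)
    qed
    show "V_multi Theta I Z Q A u = V_single Theta (Z 1) (Q 1) A u"
      using V_multi_le_V_single[OF fin I(2) A R act_A best] V_single_le_V_multi[OF fin I(2) A R, of u]
      by (rule antisym)
  qed
qed

theorem theorem4:
  fixes m :: nat and Y :: "nat \<Rightarrow> 'y set" and P :: "nat \<Rightarrow> nat \<Rightarrow> 'y \<Rightarrow> real"
    and A :: "'a set" and u :: "nat \<Rightarrow> 'a \<Rightarrow> real"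
  assumes "1 \<le> m"
    and "\<forall>i\<in>{1..m}. is_experiment Theta (Y i) (P i)"
    and "\<forall>i\<in>{2..m}. chernoff (Y i) (P i) < chernoff (Y 1) (P 1)"
    and "finite A" and "A \<noteq> {}"
  shows "\<exists>t0. \<forall>t\<ge>t0.
    V_multi Theta {1..m} (\<lambda>i. power_carrier t (Y i)) (\<lambda>i. power_exp (P i) t) A u
    = V_single Theta (power_carrier t (Y 1)) (power_exp (P 1) t) A u"
proof -
  obtain K where K: "\<And>I (Z :: nat \<Rightarrow> (nat \<Rightarrow> 'y) set) Q. finite I \<Longrightarrow> 1 \<in> I \<Longrightarrow>
      (\<And>i. i \<in> I \<Longrightarrow> is_experiment Theta (Z i) (Q i)) \<Longrightarrow>
      (\<And>i. i \<in> I - {1} \<Longrightarrow> K * overlap (Z 1) (Q 1) \<le> overlap (Z i) (Q i) \<and> 0 < overlap (Z i) (Q i)) \<Longrightarrow>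
      V_multi Theta I Z Q A u = V_single Theta (Z 1) (Q 1) A u"
    using exists_overlap_domination_factor[OF assms(4,5)] by blast
  have "eventually (\<lambda>t. \<forall>i\<in>{2..m}. K * overlap (power_carrier t (Y 1)) (power_exp (P 1) t)
      \<le> overlap (power_carrier t (Y i)) (power_exp (P i) t)
      \<and> 0 < overlap (power_carrier t (Y i)) (power_exp (P i) t)) sequentially"
    using assms(1-3) by (intro eventually_ball_finite ballI overlap_power_dominates) auto
  then obtain t0 where "\<forall>i\<in>{2..m}. K * overlap (power_carrier t (Y 1)) (power_exp (P 1) t)
      \<le> overlap (power_carrier t (Y i)) (power_exp (P i) t)
      \<and> 0 < overlap (power_carrier t (Y i)) (power_exp (P i) t)" if "t \<ge> t0" for t
    by (auto simp: eventually_sequentially)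
  moreover have "{1..m} - {1} = {2..m}" by auto
  ultimately show ?thesis
    using assms(1,2) by (intro exI[of _ t0] allI impI K) (auto intro: is_experiment_power)
qed

end
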